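(* Let $F$ be a field of characteristic $\neq 2,3$, $V$ an $F$-vector space and $f$ a symmetric bilinear form on $V$. The Jordan algebra $J(V,f)$ admits a derivation with invertible values if and only if there exist $x, y \in V$ such that $f(x,x)\neq 0$, $f(y,y)\neq 0$, $f(x,y)=0$, and $-\frac{f(y,y)}{f(x,x)}$ is not a square in $F$.
   Context: $J(V,f)$ is the vector space $F\oplus V$ with multiplication $(\alpha+v)(\beta+u) = \alpha\beta + f(v,u) + \alpha u + \beta v$ for $\alpha,\beta\in F$, $u,v\in V$; it is a unital Jordan algebra. An element $x$ of a unital Jordan algebra $J$ is invertible if there exists $y\in J$ with $xy=1$, $x^2y=x$. A derivation with invertible values of $J$ is a nonzero derivation $d$ of $J$ such that for every $x \in J$, $d(x)$ is either invertible or equal to $0$. *)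

theory Defs
  imports Complex_Main "HOL-Library.Product_Plus"
begin

text \<open>The Jordan algebra J(V,f) = F \<oplus> V, elements represented as pairs (alpha, v).\<close>

definition jmult :: "('a::field \<Rightarrow> 'v::ab_group_add \<Rightarrow> 'v) \<Rightarrow> ('v \<Rightarrow> 'v \<Rightarrow> 'a)
    \<Rightarrow> 'a \<times> 'v \<Rightarrow> 'a \<times> 'v \<Rightarrow> 'a \<times> 'v" where
  "jmult scale f x y = (fst x * fst y + f (snd x) (snd y),
                        scale (fst x) (snd y) + scale (fst y) (snd x))"

definition jone :: "'a::field \<times> 'v::ab_group_add" where
  "jone = (1, 0)"

definition jscale :: "('a::field \<Rightarrow> 'v::ab_group_add \<Rightarrow> 'v) \<Rightarrow> 'a \<Rightarrow> 'a \<times> 'v \<Rightarrow> 'a \<times> 'v" where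
  "jscale scale c x = (c * fst x, scale c (snd x))"

definition jinvertible :: "('a::field \<Rightarrow> 'v::ab_group_add \<Rightarrow> 'v) \<Rightarrow> ('v \<Rightarrow> 'v \<Rightarrow> 'a)
    \<Rightarrow> 'a \<times> 'v \<Rightarrow> bool" where
  "jinvertible scale f x \<longleftrightarrow>
     (\<exists>y. jmult scale f x y = jone \<and> jmult scale f (jmult scale f x x) y = x)"

definition jderivation :: "('a::field \<Rightarrow> 'v::ab_group_add \<Rightarrow> 'v) \<Rightarrow> ('v \<Rightarrow> 'v \<Rightarrow> 'a)
    \<Rightarrow> ('a \<times> 'v \<Rightarrow> 'a \<times> 'v) \<Rightarrow> bool" where
  "jderivation scale f d \<longleftrightarrow>
     (\<forall>x y. d (x + y) = d x + d y) \<and>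
     (\<forall>c x. d (jscale scale c x) = jscale scale c (d x)) \<and>
     (\<forall>x y. d (jmult scale f x y) = jmult scale f (d x) y + jmult scale f x (d y))"

definition derivation_inv_values :: "('a::field \<Rightarrow> 'v::ab_group_add \<Rightarrow> 'v) \<Rightarrow> ('v \<Rightarrow> 'v \<Rightarrow> 'a)
    \<Rightarrow> ('a \<times> 'v \<Rightarrow> 'a \<times> 'v) \<Rightarrow> bool" where
  "derivation_inv_values scale f d \<longleftrightarrow>
     jderivation scale f d \<and> d \<noteq> (\<lambda>_. 0) \<and>
     (\<forall>x. d x = 0 \<or> jinvertible scale f (d x))"

end

theory Submission
  imports Defs
begin

text \<open>Over a field of characteristic \<open>\<noteq> 2\<close>, every derivation of \<open>J(V,f)\<close> kills the scalars and maps
  \<open>V\<close> to itself by a linear map \<open>D\<close> that is skew-adjoint for \<open>f\<close>; since \<open>(0,w)\<close> is invertible exactly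
  when \<open>f(w,w) \<noteq> 0\<close>, a derivation with invertible values is the same as a nonzero skew-adjoint \<open>D\<close>
  whose nonzero values are anisotropic. Given such \<open>D\<close> and \<open>w = D v \<noteq> 0\<close>, skewness gives
  \<open>f(w, D w) = 0\<close> and \<open>f(D w, v) = -f(w,w)\<close>, so \<open>x = w\<close>, \<open>y = D w\<close> is an orthogonal anisotropic pair;
  if \<open>-f(y,y)/f(x,x) = t\<^sup>2\<close> then \<open>D(t v + w) = t x + y\<close> would be a nonzero isotropic value.
  Conversely, for such a pair the map \<open>v \<mapsto> f(x,v) y - f(y,v) x\<close> is skew-adjoint and
  \<open>f(D v, D v) = f(x,v)\<^sup>2 f(y,y) + f(y,v)\<^sup>2 f(x,x)\<close>, which vanishes only when \<open>D v = 0\<close>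
  because \<open>-f(y,y)/f(x,x)\<close> is not a square.\<close>

lemma diagonal_binary_form_anisotropic:
  fixes a b p q :: "'a::field"
  assumes "a \<noteq> 0" "b \<noteq> 0" "\<not> (\<exists>t. t * t = - (b / a))"
    and "p * p * b + q * q * a = 0"
  shows "p = 0 \<and> q = 0"
proof (cases "q = 0")
  case True
  then show ?thesis using assms(2,4) by simp
next
  case False
  have "p * p * b = - (q * q * a)" using assms(4) by (simp add: eq_neg_iff_add_eq_0)
  then have "(p / q * (b / a)) * (p / q * (b / a)) = - (q * q * a) * b / (q * q * a * a)"
    by (simp add: field_simps)
  also have "\<dots> = - (b / a)" using False assms(1) by (simp add: field_simps)
  finally show ?thesis using assms(3) by blast
qed

definition vector_derivation :: "('v \<Rightarrow> 'v) \<Rightarrow> 'a::zero \<times> 'v \<Rightarrow> 'a \<times> 'v" where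
  "vector_derivation D p = (0, D (snd p))"

locale symmetric_bilinear_form = vector_space scale
  for scale :: "'a::field \<Rightarrow> 'v::ab_group_add \<Rightarrow> 'v" +
  fixes f :: "'v \<Rightarrow> 'v \<Rightarrow> 'a"
  assumes linear_right: "Vector_Spaces.linear scale (*) (\<lambda>v. f u v)"
    and symmetric: "f u v = f v u"
begin

lemma add_right: "f u (v + w) = f u v + f u w"
  and scale_right: "f u (scale c v) = c * f u v"
  using linear_right[of u] unfolding Vector_Spaces.linear_iff by auto

lemma zero_right [simp]: "f u 0 = 0"
  using scale_right[of u 0 0] by simp

lemma zero_left [simp]: "f 0 u = 0"
  using zero_right symmetric by metis

lemma diff_right: "f u (v - w) = f u v - f u w"
  using add_right[of u "v - w" w] by (simp add: algebra_simps)

lemma add_left: "f (u + v) w = f u w + f v w"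
  and scale_left: "f (scale c u) w = c * f u w"
  and diff_left: "f (u - v) w = f u w - f v w"
  by (metis add_right symmetric, metis scale_right symmetric, metis diff_right symmetric)

lemmas bilinear_simps = add_right scale_right diff_right add_left scale_left diff_left

lemma jinvertible_vector_iff: "jinvertible scale f (0, w) \<longleftrightarrow> f w w \<noteq> 0"
proof
  assume "jinvertible scale f (0, w)"
  then obtain y where y1: "jmult scale f (0, w) y = jone"
    and y2: "jmult scale f (jmult scale f (0, w) (0, w)) y = (0, w)"
    unfolding jinvertible_def by blast
  show "f w w \<noteq> 0"
  proof
    assume "f w w = 0"
    then have "jmult scale f (0, w) (0, w) = 0" by (simp add: jmult_def zero_prod_def)
    with y2 have "w = 0" by (simp add: jmult_def zero_prod_def)
    with y1 show False by (simp add: jmult_def jone_def)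
  qed
next
  assume fww: "f w w \<noteq> 0"
  \<comment> \<open>\<open>(0,w)\<close> squares to the scalar \<open>f(w,w)\<close>, so its inverse is \<open>(0, w / f(w,w))\<close>.\<close>
  let ?y = "(0, scale (1 / f w w) w)"
  have "jmult scale f (0, w) ?y = jone" and "jmult scale f (jmult scale f (0, w) (0, w)) ?y = (0, w)"
    using fww by (simp_all add: jmult_def jone_def scale_right)
  then show "jinvertible scale f (0, w)" unfolding jinvertible_def by blast
qed

definition skew_adjoint :: "('v \<Rightarrow> 'v) \<Rightarrow> bool" where
  "skew_adjoint D \<longleftrightarrow> (\<forall>u v. f (D u) v + f u (D v) = 0)"

definition anisotropic_values :: "('v \<Rightarrow> 'v) \<Rightarrow> bool" where
  "anisotropic_values D \<longleftrightarrow> (\<forall>v. D v \<noteq> 0 \<longrightarrow> f (D v) (D v) \<noteq> 0)"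

lemma skew_adjoint_orthogonal:
  assumes "skew_adjoint D" "(2::'a) \<noteq> 0"
  shows "f w (D w) = 0"
proof -
  have "f w (D w) + f w (D w) = 0"
    using assms(1) symmetric[of "D w" w] unfolding skew_adjoint_def by metis
  then show ?thesis using assms(2) by (simp flip: mult_2)
qed

lemma jderivation_scalar_eq_0:
  assumes "jderivation scale f d"
  shows "d (\<alpha>, 0) = 0"
proof -
  have mult: "d (jmult scale f x y) = jmult scale f (d x) y + jmult scale f x (d y)" for x y
    using assms unfolding jderivation_def by blast
  have "jmult scale f (1, 0) (1, 0) = (1, 0)" by (simp add: jmult_def)
  then have "d (1, 0) = jmult scale f (d (1, 0)) (1, 0) + jmult scale f (1, 0) (d (1, 0))"
    using mult[of "(1, 0)" "(1, 0)"] by simp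
  also have "\<dots> = d (1, 0) + d (1, 0)"
    by (cases "d (1, 0)") (simp add: jmult_def)
  finally have "d (1, 0) = 0" by simp
  moreover have "d (jscale scale \<alpha> (1, 0)) = jscale scale \<alpha> (d (1, 0))"
    using assms unfolding jderivation_def by blast
  ultimately show ?thesis by (simp add: jscale_def zero_prod_def)
qed

lemma jderivation_eq_vector_derivation:
  assumes der: "jderivation scale f d" and two: "(2::'a) \<noteq> 0"
  defines "D \<equiv> \<lambda>v. snd (d (0, v))"
  shows "d = vector_derivation D" and "Vector_Spaces.linear scale scale D" and "skew_adjoint D"
proof -
  have add: "d (x + y) = d x + d y"
    and jscale: "d (jscale scale c x) = jscale scale c (d x)"
    and mult: "d (jmult scale f x y) = jmult scale f (d x) y + jmult scale f x (d y)" for x y c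
    using der unfolding jderivation_def by blast+
  define a where "a v = fst (d (0, v))" for v
  have d_vector: "d (0, v) = (a v, D v)" for v by (simp add: a_def D_def)
  \<comment> \<open>The product \<open>(0,v)(0,u) = (f(v,u), 0)\<close> is a scalar, which every derivation kills.\<close>
  have product: "f (D v) u + f v (D u) = 0 \<and> scale (a v) u + scale (a u) v = 0" for u v
  proof -
    have "d (jmult scale f (0, v) (0, u)) = 0"
      using jderivation_scalar_eq_0[OF der] by (simp add: jmult_def)
    with mult[of "(0, v)" "(0, u)"] show ?thesis
      by (simp add: d_vector jmult_def zero_prod_def)
  qed
  have "a v = 0" for v
  proof (cases "v = 0")
    case True
    then show ?thesis using jderivation_scalar_eq_0[OF der, of 0] by (simp add: a_def)
  next
    case False
    have "scale (a v + a v) v = 0" using product[of v v] by (simp only: scale_left_distrib)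
    then have "a v + a v = 0" using False by simp
    with two show ?thesis by (simp flip: mult_2)
  qed
  moreover have "d (\<alpha>, v) = d (0, v)" for \<alpha> v
    using add[of "(\<alpha>, 0)" "(0, v)"] jderivation_scalar_eq_0[OF der] by simp
  ultimately show "d = vector_derivation D"
    by (auto simp: vector_derivation_def d_vector)
  have "D (u + v) = D u + D v" for u v
    using add[of "(0, u)" "(0, v)"] by (simp add: D_def)
  moreover have "D (scale c v) = scale c (D v)" for c v
    using jscale[of c "(0, v)"] by (simp add: D_def jscale_def)
  ultimately show "Vector_Spaces.linear scale scale D"
    using vector_space_axioms by (simp add: Vector_Spaces.linear_iff)
  show "skew_adjoint D" using product unfolding skew_adjoint_def by blast
qed

lemma jderivation_vector_derivation:
  assumes "Vector_Spaces.linear scale scale D" "skew_adjoint D"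
  shows "jderivation scale f (vector_derivation D)"
proof -
  have add: "D (u + v) = D u + D v" and scale: "D (scale c v) = scale c (D v)" for u v c
    using assms(1) unfolding Vector_Spaces.linear_iff by blast+
  have skew: "f (D u) v + f u (D v) = 0" for u v
    using assms(2) unfolding skew_adjoint_def by blast
  show ?thesis
    unfolding jderivation_def
  proof (intro conjI allI)
    fix p q :: "'a \<times> 'v"
    show "vector_derivation D (p + q) = vector_derivation D p + vector_derivation D q"
      by (simp add: vector_derivation_def add)
    obtain \<alpha> v \<beta> u where "p = (\<alpha>, v)" "q = (\<beta>, u)" by fastforce
    then show "vector_derivation D (jmult scale f p q)
        = jmult scale f (vector_derivation D p) q + jmult scale f p (vector_derivation D q)"
      using skew[of v u] by (simp add: vector_derivation_def jmult_def add scale add.commute)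
  next
    fix c p
    show "vector_derivation D (jscale scale c p) = jscale scale c (vector_derivation D p)"
      by (simp add: vector_derivation_def jscale_def scale)
  qed
qed

lemma derivation_inv_values_iff:
  assumes "(2::'a) \<noteq> 0"
  shows "derivation_inv_values scale f d \<longleftrightarrow>
    (\<exists>D. Vector_Spaces.linear scale scale D \<and> skew_adjoint D \<and> anisotropic_values D \<and>
         D \<noteq> (\<lambda>_. 0) \<and> d = vector_derivation D)"
proof -
  have inv_values: "(\<forall>p. vector_derivation D p = 0 \<or> jinvertible scale f (vector_derivation D p))
      \<longleftrightarrow> anisotropic_values D" for D
    by (auto simp: vector_derivation_def anisotropic_values_def jinvertible_vector_iff zero_prod_def)
  have nonzero: "vector_derivation D \<noteq> (\<lambda>_. 0) \<longleftrightarrow> D \<noteq> (\<lambda>_. 0)" for D :: "'v \<Rightarrow> 'v"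
    by (simp add: vector_derivation_def fun_eq_iff zero_prod_def)
  show ?thesis
  proof
    assume "derivation_inv_values scale f d"
    then have der: "jderivation scale f d" and "d \<noteq> (\<lambda>_. 0)"
      and "\<forall>p. d p = 0 \<or> jinvertible scale f (d p)"
      unfolding derivation_inv_values_def by blast+
    with jderivation_eq_vector_derivation[OF der assms] inv_values nonzero
    show "\<exists>D. Vector_Spaces.linear scale scale D \<and> skew_adjoint D \<and> anisotropic_values D \<and>
        D \<noteq> (\<lambda>_. 0) \<and> d = vector_derivation D"
      by metis
  next
    assume "\<exists>D. Vector_Spaces.linear scale scale D \<and> skew_adjoint D \<and> anisotropic_values D \<and>
        D \<noteq> (\<lambda>_. 0) \<and> d = vector_derivation D"
    then show "derivation_inv_values scale f d"
      unfolding derivation_inv_values_def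
      using jderivation_vector_derivation inv_values nonzero by metis
  qed
qed

lemma orthogonal_anisotropic_pair_of_skew_adjoint:
  assumes lin: "Vector_Spaces.linear scale scale D" and skew: "skew_adjoint D"
    and aniso: "anisotropic_values D" and "D v \<noteq> 0" and two: "(2::'a) \<noteq> 0"
  shows "\<exists>x y. f x x \<noteq> 0 \<and> f y y \<noteq> 0 \<and> f x y = 0 \<and> \<not> (\<exists>t. t * t = - (f y y / f x x))"
proof -
  define w where "w = D v"
  define z where "z = D w"
  have fww: "f w w \<noteq> 0" using aniso \<open>D v \<noteq> 0\<close> unfolding anisotropic_values_def w_def by blast
  have "f z v + f w w = 0" using skew unfolding skew_adjoint_def z_def w_def by blast
  then have "z \<noteq> 0" using fww by auto
  then have fzz: "f z z \<noteq> 0" using aniso unfolding anisotropic_values_def z_def by blast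
  have fwz: "f w z = 0" unfolding z_def by (rule skew_adjoint_orthogonal[OF skew two])
  have "\<not> (\<exists>t. t * t = - (f z z / f w w))"
  proof
    assume "\<exists>t. t * t = - (f z z / f w w)"
    then obtain t where t: "t * t = - (f z z / f w w)" ..
    have D_image: "D (scale t v + w) = scale t w + z"
      using lin unfolding Vector_Spaces.linear_iff w_def z_def by simp
    have "f (scale t w + z) (scale t w + z) = t * t * f w w + f z z"
      by (simp add: bilinear_simps fwz symmetric[of z w] algebra_simps)
    also have "\<dots> = 0" using t fww by (simp add: field_simps)
    finally have "scale t w + z = 0"
      using aniso D_image unfolding anisotropic_values_def by metis
    moreover have "f (scale t w + z) z = f z z" by (simp add: bilinear_simps fwz)
    ultimately show False using fzz by simp
  qed
  with fww fzz fwz show ?thesis by blast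
qed

definition wedge_map :: "'v \<Rightarrow> 'v \<Rightarrow> 'v \<Rightarrow> 'v" where
  "wedge_map x y v = scale (f x v) y - scale (f y v) x"

lemma linear_wedge_map: "Vector_Spaces.linear scale scale (wedge_map x y)"
  using vector_space_axioms
  by (simp add: Vector_Spaces.linear_iff wedge_map_def bilinear_simps scale_left_distrib
      scale_right_diff_distrib algebra_simps)

lemma skew_adjoint_wedge_map: "skew_adjoint (wedge_map x y)"
  unfolding skew_adjoint_def wedge_map_def
  by (simp add: bilinear_simps symmetric[of _ x] symmetric[of _ y] algebra_simps)

lemma wedge_map_isotropy:
  assumes "f x y = 0"
  shows "f (wedge_map x y v) (wedge_map x y v) = f x v * f x v * f y y + f y v * f y v * f x x"
  using assms symmetric[of x y] by (simp add: wedge_map_def bilinear_simps algebra_simps)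

lemma anisotropic_values_wedge_map:
  assumes "f x x \<noteq> 0" "f y y \<noteq> 0" "f x y = 0" "\<not> (\<exists>t. t * t = - (f y y / f x x))"
  shows "anisotropic_values (wedge_map x y)"
  unfolding anisotropic_values_def
proof (intro allI impI notI)
  fix v
  assume nonzero: "wedge_map x y v \<noteq> 0"
    and "f (wedge_map x y v) (wedge_map x y v) = 0"
  then have "f x v * f x v * f y y + f y v * f y v * f x x = 0"
    by (simp add: wedge_map_isotropy assms(3))
  then have "f x v = 0 \<and> f y v = 0"
    using diagonal_binary_form_anisotropic assms(1,2,4) by blast
  with nonzero show False by (simp add: wedge_map_def)
qed

lemma wedge_map_nonzero:
  assumes "f x x \<noteq> 0" "f y y \<noteq> 0" "f x y = 0"
  shows "wedge_map x y x \<noteq> 0"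
proof -
  have "y \<noteq> 0" using assms(2) by auto
  then show ?thesis using assms symmetric[of x y] by (simp add: wedge_map_def)
qed

end

theorem lemma5:
  fixes scale :: "'a::field \<Rightarrow> 'v::ab_group_add \<Rightarrow> 'v"
    and f :: "'v \<Rightarrow> 'v \<Rightarrow> 'a"
  assumes "Vector_Spaces.vector_space scale"
    and "(2::'a) \<noteq> 0" and "(3::'a) \<noteq> 0"
    and "\<And>u. Vector_Spaces.linear scale (*) (\<lambda>v. f u v)"
    and "\<And>u v. f u v = f v u"
  shows "(\<exists>d. derivation_inv_values scale f d) \<longleftrightarrow>
         (\<exists>x y. f x x \<noteq> 0 \<and> f y y \<noteq> 0 \<and> f x y = 0 \<and>
                \<not> (\<exists>t. t * t = - (f y y / f x x)))"
proof -
  interpret symmetric_bilinear_form scale f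
    using assms(1,4,5) by (simp add: symmetric_bilinear_form_def symmetric_bilinear_form_axioms_def)
  show ?thesis
    unfolding derivation_inv_values_iff[OF assms(2)]
  proof
    assume "\<exists>d D. Vector_Spaces.linear scale scale D \<and> skew_adjoint D \<and> anisotropic_values D \<and>
        D \<noteq> (\<lambda>_. 0) \<and> d = vector_derivation D"
    then obtain D v where "Vector_Spaces.linear scale scale D" "skew_adjoint D"
      "anisotropic_values D" "D v \<noteq> 0" by (metis ext)
    then show "\<exists>x y. f x x \<noteq> 0 \<and> f y y \<noteq> 0 \<and> f x y = 0 \<and> \<not> (\<exists>t. t * t = - (f y y / f x x))"
      using orthogonal_anisotropic_pair_of_skew_adjoint assms(2) by blast
  next
    assume "\<exists>x y. f x x \<noteq> 0 \<and> f y y \<noteq> 0 \<and> f x y = 0 \<and> \<not> (\<exists>t. t * t = - (f y y / f x x))"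
    then obtain x y where pair: "f x x \<noteq> 0" "f y y \<noteq> 0" "f x y = 0"
      "\<not> (\<exists>t. t * t = - (f y y / f x x))" by blast
    then have "wedge_map x y \<noteq> (\<lambda>_. 0)" using wedge_map_nonzero by metis
    then show "\<exists>d D. Vector_Spaces.linear scale scale D \<and> skew_adjoint D \<and> anisotropic_values D \<and>
        D \<noteq> (\<lambda>_. 0) \<and> d = vector_derivation D"
      using linear_wedge_map skew_adjoint_wedge_map anisotropic_values_wedge_map[OF pair] by blast
  qed
qed

end
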